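(* Let $n\ge1$. If $2\le m\le\infty$, then $c_{\pi s,s+}(n,\ell_1^m)=\gamma(n)$. Consequently, $$\sup_E\frac{c_{\pi s,s+}(n,E)}{c_+(E)^n}=\sup_{E:\,c_+(E)=1}c_{\pi s,s+}(n,E)=c_{\pi s,s+}(n,\ell_1)=c_{\pi s,s+}(n,\ell_1^2)=\gamma(n),$$ where the suprema are over all ordered normed spaces $E$.
   Context: All vector spaces are real. An ordered normed space is a real normed space $E$ together with a closed convex cone $E_+\subseteq E$ (positive elements) such that $E=E_+-E_+$ and such that, writing $\|x\|_+:=\inf\{\|y\|+\|z\|: x=y-z,\ y,z\in E_+\}$, the constant $c_+(E):=\sup\{\|x\|_+:\|x\|\le1\}$ is finite; $E^+$ denotes $E$ with the norm $\|\cdot\|_+$. $E^{\vee n}$ is the space of symmetric tensors in the algebraic tensor power $E^{\otimes n}$, and $x^{\otimes n}:=x\otimes\cdots\otimes x$. For a normed space $F$, $\|\mathbf{x}\|_{\pi s,F}:=\inf\{\sum_k|a_k|\,\|x_k\|^n : \mathbf{x}=\sum_k a_k x_k^{\otimes n},\ x_k\in F\}$, and for an ordered normed space $E$, $\|\mathbf{x}\|_{\pi s+,E}:=\inf\{\sum_k|a_k|\,\|x_k\|^n : \mathbf{x}=\sum_k a_k x_k^{\otimes n},\ x_k\in E_+\}$ (finite sums, $a_k\in\mathbb{R}$). $c_{\pi s,s+}(n,E):=\sup\{\|\mathbf{x}\|_{\pi s+,E}/\|\mathbf{x}\|_{\pi s,E}:0\ne\mathbf{x}\in E^{\vee n}\}$.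 $\gamma(n)$ is the smallest constant $C$ such that $\|\mathbf{x}\|_{\pi s+,E}\le C\,\|\mathbf{x}\|_{\pi s,E^+}$ for every ordered normed space $E$ and every $\mathbf{x}\in E^{\vee n}$ (such finite constants exist). $\ell_1^m$ ($1\le m<\infty$) is $\mathbb{R}^m$ with the $\ell_1$-norm, $\ell_1^\infty=\ell_1$, ordered coordinatewise. *)

theory Defs
  imports "HOL-Analysis.Analysis" "HOL-Library.Function_Algebras"
begin

instantiation "fun" :: (type, real_vector) real_vector
begin
definition scaleR_fun :: "real \<Rightarrow> ('a \<Rightarrow> 'b) \<Rightarrow> 'a \<Rightarrow> 'b" where
  "scaleR_fun c f = (\<lambda>x. c *\<^sub>R f x)"
instance
  by standard (simp_all add: scaleR_fun_def fun_eq_iff scaleR_add_right scaleR_add_left)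
end

text \<open>An ordered normed space is represented by a triple (V, N, P): a linear subspace V
  of an ambient real vector space, a norm N on V, and the positive cone P.\<close>

definition is_norm_on :: "'a::real_vector set \<Rightarrow> ('a \<Rightarrow> real) \<Rightarrow> bool" where
  "is_norm_on V N \<longleftrightarrow>
     (\<forall>x\<in>V. 0 \<le> N x) \<and> (\<forall>x\<in>V. N x = 0 \<longleftrightarrow> x = 0) \<and>
     (\<forall>x\<in>V. \<forall>c. N (c *\<^sub>R x) = \<bar>c\<bar> * N x) \<and>
     (\<forall>x\<in>V. \<forall>y\<in>V. N (x + y) \<le> N x + N y)"

definition norm_plus :: "'a::real_vector set \<Rightarrow> ('a \<Rightarrow> real) \<Rightarrow> 'a set \<Rightarrow> 'a \<Rightarrow> real" where
  "norm_plus V N P x = Inf {N y + N z | y z. y \<in> P \<and> z \<in> P \<and> x = y - z}"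

definition c_plus :: "'a::real_vector set \<Rightarrow> ('a \<Rightarrow> real) \<Rightarrow> 'a set \<Rightarrow> real" where
  "c_plus V N P = Sup {norm_plus V N P x | x. x \<in> V \<and> N x \<le> 1}"

definition ordered_normed_space :: "'a::real_vector set \<Rightarrow> ('a \<Rightarrow> real) \<Rightarrow> 'a set \<Rightarrow> bool" where
  "ordered_normed_space V N P \<longleftrightarrow>
     subspace V \<and> is_norm_on V N \<and> P \<subseteq> V \<and>
     (\<forall>x\<in>P. \<forall>y\<in>P. x + y \<in> P) \<and> (\<forall>x\<in>P. \<forall>c::real. 0 \<le> c \<longrightarrow> c *\<^sub>R x \<in> P) \<and>
     (\<forall>s x. (\<forall>k. s k \<in> P) \<and> x \<in> V \<and> (\<lambda>k. N (s k - x)) \<longlonglongrightarrow> 0 \<longrightarrow> x \<in> P) \<and>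
     V = {y - z | y z. y \<in> P \<and> z \<in> P} \<and>
     bdd_above {norm_plus V N P x | x. x \<in> V \<and> N x \<le> 1}"

text \<open>A symmetric tensor \<open>\<Sum>\<^sub>k a\<^sub>k x\<^sub>k\<^sup>\<otimes>\<^sup>n\<close> in the algebraic
  symmetric tensor power is represented faithfully (injectively, linearly) by the function
  \<open>f \<mapsto> \<Sum>\<^sub>k a\<^sub>k f(x\<^sub>k)\<^sup>n\<close> on linear functionals f (and 0 on non-linear f).\<close>
definition symrep :: "nat \<Rightarrow> (real \<times> 'a::real_vector) list \<Rightarrow> ('a \<Rightarrow> real) \<Rightarrow> real" where
  "symrep n xs = (\<lambda>f. if linear f then (\<Sum>(a, x)\<leftarrow>xs. a * (f x) ^ n) else 0)"

definition sym_tensors :: "nat \<Rightarrow> 'a::real_vector set \<Rightarrow> (('a \<Rightarrow> real) \<Rightarrow> real) set" where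
  "sym_tensors n V = {symrep n xs | xs. snd ` set xs \<subseteq> V}"

definition proj_sym_norm :: "nat \<Rightarrow> 'a::real_vector set \<Rightarrow> ('a \<Rightarrow> real) \<Rightarrow> (('a \<Rightarrow> real) \<Rightarrow> real) \<Rightarrow> real" where
  "proj_sym_norm n S N u =
     Inf {(\<Sum>(a, x)\<leftarrow>xs. \<bar>a\<bar> * (N x) ^ n) | xs. snd ` set xs \<subseteq> S \<and> u = symrep n xs}"

abbreviation pi_s :: "nat \<Rightarrow> 'a::real_vector set \<Rightarrow> ('a \<Rightarrow> real) \<Rightarrow> (('a \<Rightarrow> real) \<Rightarrow> real) \<Rightarrow> real" where
  "pi_s n V N u \<equiv> proj_sym_norm n V N u"

abbreviation pi_s_plus :: "nat \<Rightarrow> 'a::real_vector set \<Rightarrow> ('a \<Rightarrow> real) \<Rightarrow> 'a set \<Rightarrow> (('a \<Rightarrow> real) \<Rightarrow> real) \<Rightarrow> real" where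
  "pi_s_plus n V N P u \<equiv> proj_sym_norm n P N u"

definition c_pss :: "nat \<Rightarrow> 'a::real_vector set \<Rightarrow> ('a \<Rightarrow> real) \<Rightarrow> 'a set \<Rightarrow> ereal" where
  "c_pss n V N P = (SUP u\<in>sym_tensors n V - {\<lambda>_. 0}. ereal (pi_s_plus n V N P u / pi_s n V N u))"

text \<open>\<open>\<gamma>(n)\<close> relative to ordered normed spaces living in type 'a; the true \<open>\<gamma>(n)\<close>
  is the supremum of these over all types.\<close>
definition gamma_on :: "'a::real_vector itself \<Rightarrow> nat \<Rightarrow> ereal" where
  "gamma_on _ n = (INF C\<in>{C::real. 0 \<le> C \<and>
      (\<forall>(V::'a set) N P. ordered_normed_space V N P \<longrightarrow>
         (\<forall>u\<in>sym_tensors n V. pi_s_plus n V N P u \<le> C * pi_s n V (norm_plus V N P) u))}. ereal C)"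

definition sup_ratio_on :: "'a::real_vector itself \<Rightarrow> nat \<Rightarrow> ereal" where
  "sup_ratio_on _ n = Sup {c_pss n V N P / ereal (c_plus V N P ^ n) | (V::'a set) N P.
       ordered_normed_space V N P}"

definition sup_unit_on :: "'a::real_vector itself \<Rightarrow> nat \<Rightarrow> ereal" where
  "sup_unit_on _ n = Sup {c_pss n V N P | (V::'a set) N P.
       ordered_normed_space V N P \<and> c_plus V N P = 1}"

definition l1m_V :: "nat \<Rightarrow> (nat \<Rightarrow> real) set" where
  "l1m_V m = {x. \<forall>i\<ge>m. x i = 0}"
definition l1m_N :: "nat \<Rightarrow> (nat \<Rightarrow> real) \<Rightarrow> real" where
  "l1m_N m x = (\<Sum>i<m. \<bar>x i\<bar>)"
definition l1m_P :: "nat \<Rightarrow> (nat \<Rightarrow> real) set" where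
  "l1m_P m = {x \<in> l1m_V m. \<forall>i. 0 \<le> x i}"

definition l1_V :: "(nat \<Rightarrow> real) set" where
  "l1_V = {x. summable (\<lambda>i. \<bar>x i\<bar>)}"
definition l1_N :: "(nat \<Rightarrow> real) \<Rightarrow> real" where
  "l1_N x = (\<Sum>i. \<bar>x i\<bar>)"
definition l1_P :: "(nat \<Rightarrow> real) set" where
  "l1_P = {x \<in> l1_V. \<forall>i. 0 \<le> x i}"

end

(*
  Write c(E) for c_{pi s, s+}(n, E). An element x of an ordered normed space E with
  norm_plus x < t splits as x = y - z with y, z >= 0 and |y| + |z| < t. The positive
  contraction T : l1^2 -> E sending the unit vectors to y/|y| and z/|z| maps
  w = (|y|, -|z|) to x, so the n-th power of x inherits the estimate valid in l1^2:
  its pi s+ norm is at most c(l1^2) |w|^n < c(l1^2) t^n. Summing over representations,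
  the pi s+ norm on E is bounded by c(l1^2) times the pi s norm of E^+, and hence by
  c(l1^2) c_+(E)^n times the pi s norm of E; so gamma(n) and both suprema are at most
  c(l1^2). Conversely, l1^m and l1 have norm_plus = norm, so their constants are at most
  gamma(n), and l1^2 is the range of a positive contractive projection in each of them,
  so c(l1^2) bounds them from below.

  That every symmetric tensor has a representation by positive vectors at all comes from
  the polarization identity (y - z)^n = sum_{k<=n} (-1)^k C(n+1, k+1) (y + k z)^n, which
  says that the (n+1)-st finite difference of a polynomial of degree n vanishes.
*)

theory Submission
  imports Defs "HOL-Computational_Algebra.Polynomial"
begin

lemma alternating_binomial_sum_Suc:
  fixes f :: "nat \<Rightarrow> 'a::comm_ring_1"
  shows "(\<Sum>i\<le>Suc N. (-1)^i * of_nat (Suc N choose i) * f i)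
       = (\<Sum>i\<le>N. (-1)^i * of_nat (N choose i) * (f i - f (Suc i)))"
proof -
  have pascal: "(\<Sum>i\<le>Suc N. (-1)^i * of_nat (Suc N choose i) * f i)
      = f 0 + (\<Sum>i\<le>N. (-1)^Suc i * of_nat (N choose i) * f (Suc i))
            + (\<Sum>i\<le>N. (-1)^Suc i * of_nat (N choose Suc i) * f (Suc i))"
    by (simp add: sum.atMost_Suc_shift sum_subtractf sum_negf algebra_simps del: sum.atMost_Suc)
  have "(\<Sum>i\<le>N. (-1)^i * of_nat (N choose i) * f i)
      = (\<Sum>i\<le>Suc N. (-1)^i * of_nat (N choose i) * f i)"
    by (simp add: binomial_eq_0)
  then have "f 0 + (\<Sum>i\<le>N. (-1)^Suc i * of_nat (N choose Suc i) * f (Suc i))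
      = (\<Sum>i\<le>N. (-1)^i * of_nat (N choose i) * f i)"
    by (simp only: sum.atMost_Suc_shift) simp
  with pascal show ?thesis
    by (simp add: sum_subtractf sum_negf right_diff_distrib)
qed

lemma alternating_binomial_sum_poly_eq_0:
  fixes p :: "'a::idom poly"
  assumes "degree p < N"
  shows "(\<Sum>i\<le>N. (-1)^i * of_nat (N choose i) * poly p (of_nat i)) = 0"
  using assms
proof (induction N arbitrary: p)
  case 0
  then show ?case by simp
next
  case (Suc N)
  define q where "q = p - pcompose p [:1, 1:]"
  have q_eval: "poly p (of_nat i) - poly p (of_nat (Suc i)) = poly q (of_nat i)" for i
    by (simp add: q_def poly_pcompose add.commute)
  show ?case
  proof (cases "degree p = 0")
    case True
    then obtain c where "p = [:c:]" by (meson degree_eq_zeroE)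
    then show ?thesis
      by (simp add: alternating_binomial_sum_Suc del: sum.atMost_Suc)
  next
    case False
    have "degree q \<le> degree p"
      unfolding q_def by (intro degree_diff_le) (simp_all add: degree_pcompose)
    moreover have "coeff q (degree p) = 0"
      using False lead_coeff_comp[of "[:1, 1:]" p] by (simp add: q_def degree_pcompose)
    ultimately have "degree q < degree p"
      using False by (metis le_neq_implies_less leading_coeff_0_iff degree_0)
    then have "degree q < N" using Suc.prems by simp
    then show ?thesis
      unfolding alternating_binomial_sum_Suc q_eval by (rule Suc.IH)
  qed
qed

lemma power_diff_polarization:
  fixes a b :: "'a::idom"
  shows "(a - b)^n = (\<Sum>k\<le>n. (-1)^k * of_nat (Suc n choose Suc k) * (a + of_nat k * b)^n)"
proof -
  have "degree ([:a - b, b:]^n) < Suc n"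
    using degree_power_le[of "[:a - b, b:]" n] by (simp split: if_splits)
  from alternating_binomial_sum_poly_eq_0[OF this]
  have "(\<Sum>i\<le>Suc n. (-1)^i * of_nat (Suc n choose i) * (a - b + of_nat i * b)^n) = 0"
    by (simp add: poly_power algebra_simps)
  then show ?thesis
    by (simp only: sum.atMost_Suc_shift) (simp add: sum_negf algebra_simps del: binomial_Suc_Suc)
qed

definition rep_cost :: "nat \<Rightarrow> ('a \<Rightarrow> real) \<Rightarrow> (real \<times> 'a) list \<Rightarrow> real" where
  "rep_cost n N xs = (\<Sum>(a, x)\<leftarrow>xs. \<bar>a\<bar> * N x ^ n)"

definition sym_reps :: "nat \<Rightarrow> 'a::real_vector set \<Rightarrow> (('a \<Rightarrow> real) \<Rightarrow> real) \<Rightarrow> (real \<times> 'a) list set" where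
  "sym_reps n S u = {xs. snd ` set xs \<subseteq> S \<and> u = symrep n xs}"

lemma proj_sym_norm_eq_Inf: "proj_sym_norm n S N u = Inf (rep_cost n N ` sym_reps n S u)"
  unfolding proj_sym_norm_def rep_cost_def sym_reps_def by (simp add: setcompr_eq_image)

lemma rep_cost_Nil [simp]: "rep_cost n N [] = 0"
  by (simp add: rep_cost_def)

lemma rep_cost_Cons [simp]: "rep_cost n N ((a, x) # xs) = \<bar>a\<bar> * N x ^ n + rep_cost n N xs"
  by (simp add: rep_cost_def)

lemma rep_cost_append: "rep_cost n N (xs @ ys) = rep_cost n N xs + rep_cost n N ys"
  by (simp add: rep_cost_def)

lemma rep_cost_scale: "rep_cost n N (map (apfst ((*) c)) xs) = \<bar>c\<bar> * rep_cost n N xs"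
  by (induction xs) (auto simp: abs_mult algebra_simps)

lemma rep_cost_scale_norm: "rep_cost n (\<lambda>x. c * N x) xs = c ^ n * rep_cost n N xs"
  by (induction xs) (auto simp: power_mult_distrib algebra_simps)

lemma rep_cost_nonneg: "\<forall>x\<in>S. 0 \<le> N x \<Longrightarrow> snd ` set xs \<subseteq> S \<Longrightarrow> 0 \<le> rep_cost n N xs"
  by (induction xs) auto

lemma rep_cost_mono:
  "(\<And>x. x \<in> snd ` set xs \<Longrightarrow> 0 \<le> N' x \<and> N' x \<le> N x) \<Longrightarrow> rep_cost n N' xs \<le> rep_cost n N xs"
proof (induction xs)
  case (Cons p xs)
  obtain a x where p: "p = (a, x)" by force
  have "\<bar>a\<bar> * N' x ^ n \<le> \<bar>a\<bar> * N x ^ n"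
    using Cons.prems p by (intro mult_left_mono power_mono) force+
  with Cons p show ?case by auto
qed simp

lemma rep_cost_map_apsnd: "rep_cost n N (map (apsnd T) xs) = rep_cost n (N \<circ> T) xs"
  by (induction xs) auto

lemma rep_cost_cong:
  "(\<And>x. x \<in> snd ` set xs \<Longrightarrow> N x = N' x) \<Longrightarrow> rep_cost n N xs = rep_cost n N' xs"
  by (induction xs) auto

lemma symrep_append: "symrep n (xs @ ys) = (\<lambda>f. symrep n xs f + symrep n ys f)"
  by (simp add: symrep_def fun_eq_iff)

lemma symrep_scale: "symrep n (map (apfst ((*) c)) xs) = (\<lambda>f. c * symrep n xs f)"
proof -
  have "(\<Sum>(a, x)\<leftarrow>map (apfst ((*) c)) xs. a * g x) = c * (\<Sum>(a, x)\<leftarrow>xs. a * g x)"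
    for g :: "'a \<Rightarrow> real"
    by (induction xs) (auto simp: algebra_simps)
  then show ?thesis by (simp add: symrep_def fun_eq_iff)
qed

lemma symrep_map_apsnd:
  assumes "linear T"
  shows "symrep n (map (apsnd T) xs) = (\<lambda>f. if linear f then symrep n xs (f \<circ> T) else 0)"
proof -
  have "(\<Sum>(a, x)\<leftarrow>map (apsnd T) xs. a * f x ^ n) = (\<Sum>(a, x)\<leftarrow>xs. a * (f \<circ> T) x ^ n)" for f
    by (induction xs) auto
  then show ?thesis
    using linear_compose[OF assms] by (auto simp: symrep_def fun_eq_iff)
qed

lemma sym_reps_append:
  "xs \<in> sym_reps n S u \<Longrightarrow> ys \<in> sym_reps n S v \<Longrightarrow> xs @ ys \<in> sym_reps n S (\<lambda>f. u f + v f)"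
  by (auto simp: sym_reps_def symrep_append)

lemma sym_reps_scale:
  "xs \<in> sym_reps n S u \<Longrightarrow> map (apfst ((*) c)) xs \<in> sym_reps n S (\<lambda>f. c * u f)"
  by (force simp: sym_reps_def symrep_scale)

lemma proj_sym_norm_le:
  assumes "\<forall>x\<in>S. 0 \<le> N x" "xs \<in> sym_reps n S u"
  shows "proj_sym_norm n S N u \<le> rep_cost n N xs"
proof -
  have "bdd_below (rep_cost n N ` sym_reps n S u)"
    using assms(1) by (intro bdd_belowI[where m=0]) (auto simp: sym_reps_def intro: rep_cost_nonneg)
  then show ?thesis
    unfolding proj_sym_norm_eq_Inf using assms(2) by (intro cInf_lower) auto
qed

lemma proj_sym_norm_greatest:
  assumes "sym_reps n S u \<noteq> {}" "\<And>xs. xs \<in> sym_reps n S u \<Longrightarrow> B \<le> rep_cost n N xs"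
  shows "B \<le> proj_sym_norm n S N u"
  unfolding proj_sym_norm_eq_Inf using assms by (intro cInf_greatest) auto

lemma proj_sym_norm_greatest_mult:
  assumes "sym_reps n S u \<noteq> {}" "0 \<le> C"
    and "\<And>xs. xs \<in> sym_reps n S u \<Longrightarrow> A \<le> C * rep_cost n N xs"
  shows "A \<le> C * proj_sym_norm n S N u"
proof (cases "C = 0")
  case True
  with assms(1,3) show ?thesis by force
next
  case False
  with assms have "A / C \<le> proj_sym_norm n S N u"
    by (intro proj_sym_norm_greatest) (auto simp: divide_le_eq mult.commute)
  with False assms(2) show ?thesis by (simp add: divide_le_eq mult.commute)
qed

lemma proj_sym_norm_nonneg:
  "\<forall>x\<in>S. 0 \<le> N x \<Longrightarrow> sym_reps n S u \<noteq> {} \<Longrightarrow> 0 \<le> proj_sym_norm n S N u"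
  by (rule proj_sym_norm_greatest) (auto simp: sym_reps_def intro: rep_cost_nonneg)

lemma proj_sym_norm_add:
  assumes N: "\<forall>x\<in>S. 0 \<le> N x" and u: "sym_reps n S u \<noteq> {}" and v: "sym_reps n S v \<noteq> {}"
  shows "proj_sym_norm n S N (\<lambda>f. u f + v f) \<le> proj_sym_norm n S N u + proj_sym_norm n S N v"
proof -
  have "proj_sym_norm n S N (\<lambda>f. u f + v f) - proj_sym_norm n S N u \<le> rep_cost n N ys"
    if ys: "ys \<in> sym_reps n S v" for ys
  proof -
    have "proj_sym_norm n S N (\<lambda>f. u f + v f) - rep_cost n N ys \<le> proj_sym_norm n S N u"
    proof (rule proj_sym_norm_greatest[OF u])
      fix xs assume "xs \<in> sym_reps n S u"
      from proj_sym_norm_le[OF N sym_reps_append[OF this ys]]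
      show "proj_sym_norm n S N (\<lambda>f. u f + v f) - rep_cost n N ys \<le> rep_cost n N xs"
        by (simp add: rep_cost_append)
    qed
    then show ?thesis by simp
  qed
  then have "proj_sym_norm n S N (\<lambda>f. u f + v f) - proj_sym_norm n S N u \<le> proj_sym_norm n S N v"
    by (rule proj_sym_norm_greatest[OF v])
  then show ?thesis by simp
qed

lemma proj_sym_norm_scale:
  assumes "\<forall>x\<in>S. 0 \<le> N x" "sym_reps n S u \<noteq> {}"
  shows "proj_sym_norm n S N (\<lambda>f. c * u f) \<le> \<bar>c\<bar> * proj_sym_norm n S N u"
  using assms(2) abs_ge_zero
proof (rule proj_sym_norm_greatest_mult)
  fix xs assume "xs \<in> sym_reps n S u"
  from proj_sym_norm_le[OF assms(1) sym_reps_scale[OF this]]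
  show "proj_sym_norm n S N (\<lambda>f. c * u f) \<le> \<bar>c\<bar> * rep_cost n N xs"
    by (simp add: rep_cost_scale)
qed

lemma proj_sym_norm_symrep_le_sum:
  assumes N: "\<forall>x\<in>S. 0 \<le> N x"
    and xs: "\<And>x. x \<in> snd ` set xs \<Longrightarrow>
      sym_reps n S (symrep n [(1, x)]) \<noteq> {} \<and> proj_sym_norm n S N (symrep n [(1, x)]) \<le> B x"
  shows "sym_reps n S (symrep n xs) \<noteq> {} \<and>
    proj_sym_norm n S N (symrep n xs) \<le> (\<Sum>(a, x)\<leftarrow>xs. \<bar>a\<bar> * B x)"
  using xs
proof (induction xs)
  case Nil
  have "[] \<in> sym_reps n S (symrep n [])" by (simp add: sym_reps_def)
  with proj_sym_norm_le[OF N this] show ?case by auto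
next
  case (Cons p xs)
  obtain a x where p: "p = (a, x)" by force
  have p_xs: "symrep n (p # xs) = (\<lambda>f. a * symrep n [(1, x)] f + symrep n xs f)"
    by (simp add: symrep_def fun_eq_iff p)
  have "\<And>y. y \<in> snd ` set xs \<Longrightarrow> sym_reps n S (symrep n [(1, y)]) \<noteq> {} \<and>
      proj_sym_norm n S N (symrep n [(1, y)]) \<le> B y"
    using Cons.prems by simp
  then have IH: "sym_reps n S (symrep n xs) \<noteq> {}"
    "proj_sym_norm n S N (symrep n xs) \<le> (\<Sum>(a, x)\<leftarrow>xs. \<bar>a\<bar> * B x)"
    using Cons.IH by auto
  have "x \<in> snd ` set (p # xs)" using p by simp
  then have x: "sym_reps n S (symrep n [(1, x)]) \<noteq> {}"
    "proj_sym_norm n S N (symrep n [(1, x)]) \<le> B x"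
    using Cons.prems by auto
  have ax: "sym_reps n S (\<lambda>f. a * symrep n [(1, x)] f) \<noteq> {}"
    using sym_reps_scale x(1) by blast
  have "proj_sym_norm n S N (\<lambda>f. a * symrep n [(1, x)] f) \<le> \<bar>a\<bar> * B x"
    using proj_sym_norm_scale[OF N x(1), of a] x(2) by (simp add: mult_left_mono order_trans)
  with proj_sym_norm_add[OF N ax IH(1)] IH(2) have
    "proj_sym_norm n S N (symrep n (p # xs)) \<le> (\<Sum>(a, x)\<leftarrow>p # xs. \<bar>a\<bar> * B x)"
    unfolding p_xs by (simp add: p)
  moreover have "sym_reps n S (symrep n (p # xs)) \<noteq> {}"
    using sym_reps_append ax IH(1) unfolding p_xs by blast
  ultimately show ?case by blast
qed

lemma proj_sym_norm_map_le:
  assumes T: "linear T" and TS: "\<And>x. x \<in> S \<Longrightarrow> T x \<in> S' \<and> N' (T x) \<le> N x"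
    and N': "\<forall>x\<in>S'. 0 \<le> N' x" and xs: "sym_reps n S (symrep n xs) \<noteq> {}"
  shows "proj_sym_norm n S' N' (symrep n (map (apsnd T) xs)) \<le> proj_sym_norm n S N (symrep n xs)"
proof (rule proj_sym_norm_greatest[OF xs])
  fix ys assume ys: "ys \<in> sym_reps n S (symrep n xs)"
  then have "map (apsnd T) ys \<in> sym_reps n S' (symrep n (map (apsnd T) xs))"
    using TS by (auto simp: sym_reps_def symrep_map_apsnd[OF T])
  from proj_sym_norm_le[OF N' this]
  have "proj_sym_norm n S' N' (symrep n (map (apsnd T) xs)) \<le> rep_cost n N' (map (apsnd T) ys)" .
  also have "\<dots> \<le> rep_cost n N ys"
    unfolding rep_cost_map_apsnd using ys TS N' by (intro rep_cost_mono) (auto simp: sym_reps_def)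
  finally show "proj_sym_norm n S' N' (symrep n (map (apsnd T) xs)) \<le> rep_cost n N ys" .
qed

lemma abs_le_proj_sym_norm:
  assumes "linear f" "\<And>x. x \<in> S \<Longrightarrow> \<bar>f x\<bar> \<le> N x" "sym_reps n S u \<noteq> {}"
  shows "\<bar>u f\<bar> \<le> proj_sym_norm n S N u"
proof (rule proj_sym_norm_greatest[OF assms(3)])
  fix xs assume "xs \<in> sym_reps n S u"
  then have u: "u = symrep n xs" and xs: "snd ` set xs \<subseteq> S" by (auto simp: sym_reps_def)
  from xs have "\<bar>\<Sum>(a, x)\<leftarrow>xs. a * f x ^ n\<bar> \<le> rep_cost n N xs"
  proof (induction xs)
    case (Cons p xs)
    obtain a x where p: "p = (a, x)" by force
    with Cons.prems assms(2) have "\<bar>a * f x ^ n\<bar> \<le> \<bar>a\<bar> * N x ^ n"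
      by (auto simp: abs_mult power_abs intro!: mult_left_mono power_mono)
    with Cons p show ?case by (auto intro: order_trans[OF abs_triangle_ineq])
  qed simp
  with u assms(1) show "\<bar>u f\<bar> \<le> rep_cost n N xs" by (simp add: symrep_def)
qed

lemma proj_sym_norm_cong:
  "\<forall>x\<in>S. N x = N' x \<Longrightarrow> proj_sym_norm n S N u = proj_sym_norm n S N' u"
  unfolding proj_sym_norm_eq_Inf
  by (intro arg_cong[where f=Inf] image_cong refl rep_cost_cong) (auto simp: sym_reps_def)

lemma symrep_diff_polarization:
  fixes y z :: "'a::real_vector"
  shows "symrep n [(1, y - z)]
    = symrep n (map (\<lambda>k. ((-1)^k * real (Suc n choose Suc k), y + real k *\<^sub>R z)) [0..<Suc n])"
proof (rule ext)
  fix f :: "'a \<Rightarrow> real"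
  show "symrep n [(1, y - z)] f
    = symrep n (map (\<lambda>k. ((-1)^k * real (Suc n choose Suc k), y + real k *\<^sub>R z)) [0..<Suc n]) f"
  proof (cases "linear f")
    case True
    have "symrep n (map (\<lambda>k. ((-1)^k * real (Suc n choose Suc k), y + real k *\<^sub>R z)) [0..<Suc n]) f
        = (\<Sum>k\<le>n. (-1)^k * real (Suc n choose Suc k) * (f y + real k * f z) ^ n)"
      using True by (simp add: symrep_def interv_sum_list_conv_sum_set_nat atLeast0LessThan
          lessThan_Suc_atMost[symmetric] o_def linear_add linear_scale del: binomial_Suc_Suc)
    also have "\<dots> = symrep n [(1, y - z)] f"
      using True by (simp add: symrep_def power_diff_polarization[symmetric] linear_diff del: binomial_Suc_Suc)
    finally show ?thesis ..
  qed (simp add: symrep_def)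
qed

lemma sym_reps_nonempty: "u \<in> sym_tensors n V \<Longrightarrow> sym_reps n V u \<noteq> {}"
  by (auto simp: sym_tensors_def sym_reps_def)

lemma sym_reps_cone_diff:
  assumes add: "\<And>x y. x \<in> P \<Longrightarrow> y \<in> P \<Longrightarrow> x + y \<in> P"
    and scale: "\<And>x c. x \<in> P \<Longrightarrow> 0 \<le> c \<Longrightarrow> c *\<^sub>R x \<in> P"
    and "y \<in> P" "z \<in> P"
  shows "sym_reps n P (symrep n [(1, y - z)]) \<noteq> {}"
proof -
  have "snd ` set (map (\<lambda>k. ((-1)^k * real (Suc n choose Suc k), y + real k *\<^sub>R z)) [0..<Suc n]) \<subseteq> P"
    using assms by auto
  then show ?thesis
    unfolding sym_reps_def symrep_diff_polarization by blast
qed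

locale ordered_normed =
  fixes V :: "'a::real_vector set" and N :: "'a \<Rightarrow> real" and P :: "'a set"
  assumes ordered_normed_space: "ordered_normed_space V N P"
begin

(* The closedness clause of ordered_normed_space makes the simplifier loop, hence the
   conjuncts are extracted with elim conjE. *)
lemma subspace: "subspace V"
  using ordered_normed_space unfolding ordered_normed_space_def by (elim conjE) assumption

lemma norm_on: "is_norm_on V N"
  using ordered_normed_space unfolding ordered_normed_space_def by (elim conjE) assumption

lemma cone_subset: "P \<subseteq> V"
  using ordered_normed_space unfolding ordered_normed_space_def by (elim conjE) assumption

lemma cone_add: "x \<in> P \<Longrightarrow> y \<in> P \<Longrightarrow> x + y \<in> P"
  using ordered_normed_space unfolding ordered_normed_space_def by (elim conjE) blast

lemma cone_scale: "x \<in> P \<Longrightarrow> 0 \<le> c \<Longrightarrow> c *\<^sub>R x \<in> P"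
  using ordered_normed_space unfolding ordered_normed_space_def by (elim conjE) blast

lemma generating: "V = {y - z | y z. y \<in> P \<and> z \<in> P}"
  using ordered_normed_space unfolding ordered_normed_space_def by (elim conjE) assumption

lemma c_plus_bdd: "bdd_above {norm_plus V N P x | x. x \<in> V \<and> N x \<le> 1}"
  using ordered_normed_space unfolding ordered_normed_space_def by (elim conjE) assumption

lemma N_nonneg: "\<forall>x\<in>V. 0 \<le> N x"
  using norm_on by (simp add: is_norm_on_def)

lemma N_eq_0_iff: "x \<in> V \<Longrightarrow> N x = 0 \<longleftrightarrow> x = 0"
  using norm_on by (simp add: is_norm_on_def)

lemma N_scale: "x \<in> V \<Longrightarrow> N (c *\<^sub>R x) = \<bar>c\<bar> * N x"
  using norm_on by (simp add: is_norm_on_def)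

lemma N_triangle: "x \<in> V \<Longrightarrow> y \<in> V \<Longrightarrow> N (x + y) \<le> N x + N y"
  using norm_on by (simp add: is_norm_on_def)

lemma N_nonneg_cone: "\<forall>x\<in>P. 0 \<le> N x"
  using N_nonneg cone_subset by blast

lemma N_diff_le: "x \<in> V \<Longrightarrow> y \<in> V \<Longrightarrow> N (x - y) \<le> N x + N y"
  using N_triangle[of x "- y"] N_scale[of y "- 1"] subspace by (simp add: subspace_neg)

lemma decompose:
  assumes "x \<in> V"
  obtains y z where "y \<in> P" "z \<in> P" "x = y - z"
  using assms by (subst (asm) generating) blast

lemma zero_in_cone: "0 \<in> P"
proof -
  obtain y z where "y \<in> P"
    using decompose[OF subspace_0[OF subspace]] .
  then have "0 *\<^sub>R y \<in> P" by (rule cone_scale) simp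
  then show ?thesis by simp
qed

lemma N_zero: "N 0 = 0"
  using N_eq_0_iff subspace by (simp add: subspace_0)

lemma N_pos: "x \<in> V \<Longrightarrow> x \<noteq> 0 \<Longrightarrow> 0 < N x"
  using N_nonneg N_eq_0_iff by (simp add: order_less_le)

lemma cone_normalize:
  assumes y: "y \<in> P"
  shows "\<exists>e\<in>P. N e \<le> 1 \<and> y = N y *\<^sub>R e"
proof (cases "y = 0")
  case True
  then show ?thesis using zero_in_cone N_zero by force
next
  case False
  with y cone_subset have "0 < N y" by (intro N_pos) auto
  with y cone_subset have "inverse (N y) *\<^sub>R y \<in> P" "N (inverse (N y) *\<^sub>R y) = 1"
    by (auto intro: cone_scale simp: N_scale)
  with \<open>0 < N y\<close> show ?thesis by force
qed

lemma sym_reps_cone_nonempty: "u \<in> sym_tensors n V \<Longrightarrow> sym_reps n P u \<noteq> {}"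
proof -
  assume "u \<in> sym_tensors n V"
  then obtain xs where u: "u = symrep n xs" and xs: "snd ` set xs \<subseteq> V"
    by (auto simp: sym_tensors_def)
  have "sym_reps n P (symrep n [(1, x)]) \<noteq> {}" if x: "x \<in> V" for x
  proof -
    obtain y z where "y \<in> P" "z \<in> P" "x = y - z"
      using decompose[OF x] .
    then show ?thesis
      using sym_reps_cone_diff[OF cone_add cone_scale] by simp
  qed
  with xs have "sym_reps n P (symrep n xs) \<noteq> {}"
    using proj_sym_norm_symrep_le_sum[OF N_nonneg_cone, where n=n and xs=xs
        and B="\<lambda>x. proj_sym_norm n P N (symrep n [(1, x)])"]
    by auto
  with u show ?thesis by simp
qed

abbreviation splitting_costs :: "'a \<Rightarrow> real set" where
  "splitting_costs x \<equiv> {N y + N z | y z. y \<in> P \<and> z \<in> P \<and> x = y - z}"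

lemma splitting_costs_bdd_below: "bdd_below (splitting_costs x)"
  using N_nonneg_cone by (intro bdd_belowI[where m=0]) force

lemma splitting_costs_nonempty:
  assumes "x \<in> V"
  shows "splitting_costs x \<noteq> {}"
proof -
  obtain y z where "y \<in> P" "z \<in> P" "x = y - z"
    using decompose[OF assms] .
  then show ?thesis by blast
qed

lemma N_le_norm_plus:
  assumes x: "x \<in> V"
  shows "N x \<le> norm_plus V N P x"
  unfolding norm_plus_def
proof (rule cInf_greatest[OF splitting_costs_nonempty[OF x]])
  fix s assume "s \<in> splitting_costs x"
  then obtain y z where "y \<in> P" "z \<in> P" "x = y - z" "s = N y + N z" by blast
  then show "N x \<le> s" using N_diff_le cone_subset by blast
qed

lemma norm_plus_nonneg: "x \<in> V \<Longrightarrow> 0 \<le> norm_plus V N P x"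
  using N_le_norm_plus N_nonneg by (meson order_trans)

lemma norm_plus_le: "y \<in> P \<Longrightarrow> z \<in> P \<Longrightarrow> norm_plus V N P (y - z) \<le> N y + N z"
  unfolding norm_plus_def by (rule cInf_lower[OF _ splitting_costs_bdd_below]) blast

lemma norm_plus_approx:
  assumes "x \<in> V" "0 < d"
  obtains y z where "y \<in> P" "z \<in> P" "x = y - z" "N y + N z < norm_plus V N P x + d"
proof -
  have "Inf (splitting_costs x) < norm_plus V N P x + d"
    using assms(2) by (simp add: norm_plus_def)
  from cInf_lessD[OF splitting_costs_nonempty[OF assms(1)] this] show ?thesis
    using that by blast
qed

lemma norm_plus_scale_le:
  assumes x: "x \<in> V" and t: "0 < t"
  shows "norm_plus V N P (t *\<^sub>R x) \<le> t * norm_plus V N P x"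
proof -
  have "norm_plus V N P (t *\<^sub>R x) / t \<le> s" if "s \<in> splitting_costs x" for s
  proof -
    from that obtain y z where yz: "y \<in> P" "z \<in> P" "x = y - z" "s = N y + N z" by blast
    then have "norm_plus V N P (t *\<^sub>R x) \<le> N (t *\<^sub>R y) + N (t *\<^sub>R z)"
      using norm_plus_le cone_scale t by (simp add: scaleR_diff_right)
    also have "\<dots> = t * s"
      using yz(1,2,4) t cone_subset N_scale[of y t] N_scale[of z t] by (auto simp: algebra_simps subset_iff)
    finally show ?thesis using t by (simp add: divide_le_eq mult.commute)
  qed
  then have "norm_plus V N P (t *\<^sub>R x) / t \<le> norm_plus V N P x"
    unfolding norm_plus_def[of V N P x] by (rule cInf_greatest[OF splitting_costs_nonempty[OF x]])
  then show ?thesis using t by (simp add: divide_le_eq mult.commute)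
qed

lemma norm_plus_zero: "norm_plus V N P 0 = 0"
  using norm_plus_le[OF zero_in_cone zero_in_cone] norm_plus_nonneg[OF subspace_0[OF subspace]] N_zero
  by simp

lemma norm_plus_le_c_plus_unit: "x \<in> V \<Longrightarrow> N x \<le> 1 \<Longrightarrow> norm_plus V N P x \<le> c_plus V N P"
  unfolding c_plus_def by (rule cSup_upper[OF _ c_plus_bdd]) blast

lemma c_plus_nonneg: "0 \<le> c_plus V N P"
  using norm_plus_le_c_plus_unit[OF subspace_0[OF subspace]] N_zero norm_plus_zero by simp

lemma norm_plus_le_c_plus:
  assumes x: "x \<in> V"
  shows "norm_plus V N P x \<le> c_plus V N P * N x"
proof (cases "x = 0")
  case True
  then show ?thesis by (simp add: norm_plus_zero N_zero)
next
  case False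
  with x have t: "0 < N x" by (rule N_pos)
  define e where "e = inverse (N x) *\<^sub>R x"
  have e: "e \<in> V" "N e = 1"
    using x t subspace N_scale by (auto simp: e_def subspace_scale)
  have "norm_plus V N P x \<le> N x * norm_plus V N P e"
    using norm_plus_scale_le[OF e(1) t] t by (simp add: e_def)
  also have "\<dots> \<le> N x * c_plus V N P"
    using norm_plus_le_c_plus_unit[OF e(1)] e(2) t by simp
  finally show ?thesis by (simp add: mult.commute)
qed

end

lemma proj_sym_norm_le_of_c_pss_le:
  assumes "c_pss n V N P \<le> ereal C" "u \<in> sym_tensors n V" "u \<noteq> (\<lambda>_. 0)"
    and "0 < proj_sym_norm n V N u"
  shows "proj_sym_norm n P N u \<le> C * proj_sym_norm n V N u"
proof -
  have "ereal (proj_sym_norm n P N u / proj_sym_norm n V N u) \<le> c_pss n V N P"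
    unfolding c_pss_def using assms(2,3) by (intro SUP_upper) auto
  then have "proj_sym_norm n P N u / proj_sym_norm n V N u \<le> C"
    using assms(1) by (meson ereal_less_eq(3) order_trans)
  with assms(4) show ?thesis
    by (simp add: pos_divide_le_eq mult.commute)
qed

lemma c_pss_leI:
  assumes "0 \<le> C" "\<forall>x\<in>V. 0 \<le> N x"
    and "\<And>u. u \<in> sym_tensors n V \<Longrightarrow> proj_sym_norm n P N u \<le> C * proj_sym_norm n V N u"
  shows "c_pss n V N P \<le> ereal C"
  unfolding c_pss_def
proof (rule SUP_least)
  fix u assume "u \<in> sym_tensors n V - {\<lambda>_. 0}"
  then have u: "u \<in> sym_tensors n V" by simp
  have "0 \<le> proj_sym_norm n V N u"
    using proj_sym_norm_nonneg[OF assms(2) sym_reps_nonempty[OF u]] .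
  with assms(1) assms(3)[OF u] have "proj_sym_norm n P N u / proj_sym_norm n V N u \<le> C"
    by (cases "proj_sym_norm n V N u = 0") (simp_all add: divide_le_eq mult.commute)
  then show "ereal (proj_sym_norm n P N u / proj_sym_norm n V N u) \<le> ereal C" by simp
qed

lemma linear_coordinate: "linear (\<lambda>v :: nat \<Rightarrow> real. v i)"
  by (rule linearI) (simp_all add: scaleR_fun_def)

lemma symrep_power_coordinate:
  fixes w :: "nat \<Rightarrow> real"
  shows "symrep n [(1, w)] (\<lambda>v. v i) = w i ^ n"
  by (simp add: symrep_def linear_coordinate)

lemma symrep_power_nonzero:
  fixes w :: "nat \<Rightarrow> real"
  assumes "w \<noteq> 0"
  shows "symrep n [(1, w)] \<noteq> (\<lambda>_. 0)"
proof -
  from assms obtain i where "w i \<noteq> 0" by (auto simp: fun_eq_iff)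
  then have "symrep n [(1, w)] (\<lambda>v. v i) \<noteq> 0" by (simp add: symrep_power_coordinate)
  then show ?thesis by force
qed

lemma proj_sym_norm_power_pos:
  fixes w :: "nat \<Rightarrow> real"
  assumes coordinate_le: "\<And>x i. x \<in> V \<Longrightarrow> \<bar>x i\<bar> \<le> N x" and "w \<in> V" "w \<noteq> 0"
  shows "0 < proj_sym_norm n V N (symrep n [(1, w)])"
proof -
  from assms obtain i where "w i \<noteq> 0" by (auto simp: fun_eq_iff)
  then have "0 < \<bar>symrep n [(1, w)] (\<lambda>v. v i)\<bar>"
    by (simp add: symrep_power_coordinate)
  also have "\<dots> \<le> proj_sym_norm n V N (symrep n [(1, w)])"
    using assms by (intro abs_le_proj_sym_norm[OF linear_coordinate coordinate_le])
      (auto simp: sym_reps_def intro!: exI[of _ "[(1, w)]"])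
  finally show ?thesis .
qed

lemma le_of_forall_pos_le_mult_power:
  fixes A C b :: real
  assumes "\<And>d. 0 < d \<Longrightarrow> A \<le> C * (b + d) ^ n"
  shows "A \<le> C * b ^ n"
proof -
  have "((\<lambda>d. C * (b + d) ^ n) \<longlongrightarrow> C * (b + 0) ^ n) (at_right 0)"
    by (intro tendsto_intros)
  moreover have "\<forall>\<^sub>F d in at_right 0. A \<le> C * (b + d) ^ n"
    using eventually_at_right_less[of "0::real"] by (rule eventually_mono) (use assms in auto)
  ultimately show ?thesis
    using trivial_limit_at_right_real[of 0] by (intro tendsto_lowerbound) (simp_all add: trivial_limit_def)
qed

lemma c_pss_le_of_contractive_projection:
  fixes V V' :: "'a::real_vector set"
  assumes E: "ordered_normed V N P" and E': "ordered_normed V' N' P'"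
    and sub: "V' \<subseteq> V" and N_eq: "\<forall>x\<in>V'. N x = N' x"
    and Q: "linear Q" and QV: "\<And>x. x \<in> V \<Longrightarrow> Q x \<in> V' \<and> N' (Q x) \<le> N x"
    and QP: "\<And>x. x \<in> P \<Longrightarrow> Q x \<in> P'" and Q_id: "\<And>x. x \<in> V' \<Longrightarrow> Q x = x"
  shows "c_pss n V' N' P' \<le> c_pss n V N P"
  unfolding c_pss_def
proof (rule SUP_mono)
  interpret E: ordered_normed V N P by (fact E)
  interpret E': ordered_normed V' N' P' by (fact E')
  fix u assume "u \<in> sym_tensors n V' - {\<lambda>_. 0}"
  then have u': "u \<in> sym_tensors n V'" and "u \<noteq> (\<lambda>_. 0)" by auto
  then obtain xs where xs: "u = symrep n xs" "snd ` set xs \<subseteq> V'" by (auto simp: sym_tensors_def)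
  with sub have u: "u \<in> sym_tensors n V" by (auto simp: sym_tensors_def)
  have "map (apsnd Q) xs = xs"
  proof (rule map_idI)
    fix p assume "p \<in> set xs"
    with xs(2) have "snd p \<in> V'" by auto
    then show "apsnd Q p = p" using Q_id by (cases p) simp
  qed
  with xs have Q_u: "symrep n (map (apsnd Q) xs) = u" by simp
  have "proj_sym_norm n V' N' u \<le> proj_sym_norm n V N u"
    using proj_sym_norm_map_le[OF Q _ E'.N_nonneg, where S=V and N=N and xs=xs and n=n]
      QV xs sym_reps_nonempty[OF u] Q_u
    by auto
  moreover have "proj_sym_norm n V N u \<le> proj_sym_norm n V' N' u"
  proof (rule proj_sym_norm_greatest[OF sym_reps_nonempty[OF u']])
    fix ys assume ys: "ys \<in> sym_reps n V' u"
    with sub have "proj_sym_norm n V N u \<le> rep_cost n N ys"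
      by (intro proj_sym_norm_le[OF E.N_nonneg]) (auto simp: sym_reps_def)
    also have "\<dots> = rep_cost n N' ys"
      using ys N_eq by (intro rep_cost_cong) (auto simp: sym_reps_def)
    finally show "proj_sym_norm n V N u \<le> rep_cost n N' ys" .
  qed
  moreover have "proj_sym_norm n P' N' u \<le> proj_sym_norm n P N u"
    using proj_sym_norm_map_le[OF Q _ E'.N_nonneg_cone, where S=P and N=N and xs=xs and n=n]
      QV QP E.cone_subset E.sym_reps_cone_nonempty[OF u] xs Q_u
    by auto
  moreover have "0 \<le> proj_sym_norm n V' N' u"
    by (rule proj_sym_norm_nonneg[OF E'.N_nonneg sym_reps_nonempty[OF u']])
  ultimately have "proj_sym_norm n P' N' u / proj_sym_norm n V' N' u
      \<le> proj_sym_norm n P N u / proj_sym_norm n V N u"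
    by (simp add: divide_right_mono)
  with u \<open>u \<noteq> (\<lambda>_. 0)\<close> show "\<exists>v\<in>sym_tensors n V - {\<lambda>_. 0}.
      ereal (proj_sym_norm n P' N' u / proj_sym_norm n V' N' u)
      \<le> ereal (proj_sym_norm n P N v / proj_sym_norm n V N v)"
    by auto
qed

locale l1_like_space =
  fixes V :: "(nat \<Rightarrow> real) set" and N :: "(nat \<Rightarrow> real) \<Rightarrow> real" and P :: "(nat \<Rightarrow> real) set"
  assumes subspace_V: "subspace V" and is_norm: "is_norm_on V N"
    and cone_eq: "P = {x \<in> V. \<forall>i. 0 \<le> x i}"
    and pos_part: "x \<in> V \<Longrightarrow> sup x 0 \<in> V"
    and N_split: "x \<in> V \<Longrightarrow> N x = N (sup x 0) + N (sup (- x) 0)"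
    and coordinate_le: "x \<in> V \<Longrightarrow> \<bar>x i\<bar> \<le> N x"
begin

lemma sup_diff_sup_neg: "sup x 0 - sup (- x) 0 = (x :: nat \<Rightarrow> real)"
  by (auto simp: fun_eq_iff sup_max max_def)

lemma neg_part: "x \<in> V \<Longrightarrow> sup (- x) 0 \<in> V"
  using subspace_diff[OF subspace_V pos_part, of x x] sup_diff_sup_neg[of x]
  by (simp add: algebra_simps)

lemma parts_in_cone: "x \<in> V \<Longrightarrow> sup x 0 \<in> P \<and> sup (- x) 0 \<in> P"
  using pos_part neg_part by (auto simp: cone_eq sup_fun_def)

lemma norm_plus_le_N:
  assumes x: "x \<in> V"
  shows "norm_plus V N P x \<le> N x"
  unfolding norm_plus_def
proof (rule cInf_lower)
  show "N x \<in> {N y + N z | y z. y \<in> P \<and> z \<in> P \<and> x = y - z}"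
    using parts_in_cone[OF x] N_split[OF x] sup_diff_sup_neg[of x] by force
  show "bdd_below {N y + N z | y z. y \<in> P \<and> z \<in> P \<and> x = y - z}"
    using is_norm by (intro bdd_belowI[where m=0]) (force simp: cone_eq is_norm_on_def)
qed

lemma cone_closed:
  assumes s: "\<forall>k. s k \<in> P" and x: "x \<in> V" and lim: "(\<lambda>k. N (s k - x)) \<longlonglongrightarrow> 0"
  shows "x \<in> P"
proof -
  have "0 \<le> x i" for i
  proof -
    have "\<bar>s k i - x i\<bar> \<le> N (s k - x)" for k
      using coordinate_le[of "s k - x" i] subspace_diff[OF subspace_V, of "s k" x] s x
      by (simp add: cone_eq)
    then have "(\<lambda>k. s k i - x i) \<longlonglongrightarrow> 0"
      by (intro Lim_null_comparison[OF _ lim]) (simp add: eventually_sequentially)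
    then have "(\<lambda>k. s k i) \<longlonglongrightarrow> x i"
      by (simp add: LIM_zero_iff)
    moreover have "\<forall>k. 0 \<le> s k i" using s by (simp add: cone_eq)
    ultimately show ?thesis by (intro LIMSEQ_le_const) auto
  qed
  with x show ?thesis by (simp add: cone_eq)
qed

sublocale ordered_normed V N P
  unfolding ordered_normed_def ordered_normed_space_def
proof (intro conjI allI impI ballI)
  show "P \<subseteq> V" by (auto simp: cone_eq)
  fix x y assume "x \<in> P" "y \<in> P"
  then show "x + y \<in> P" by (auto simp: cone_eq subspace_add[OF subspace_V])
next
  fix x and c :: real assume "x \<in> P" "0 \<le> c"
  then have "c *\<^sub>R x \<in> V" "\<forall>i. 0 \<le> (c *\<^sub>R x) i"
    using subspace_scale[OF subspace_V] by (simp_all add: cone_eq scaleR_fun_def)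
  then show "c *\<^sub>R x \<in> P" by (simp add: cone_eq)
next
  fix s x assume "(\<forall>k. s k \<in> P) \<and> x \<in> V \<and> (\<lambda>k. N (s k - x)) \<longlonglongrightarrow> 0"
  then show "x \<in> P" using cone_closed by blast
next
  show "V = {y - z | y z. y \<in> P \<and> z \<in> P}"
  proof (intro set_eqI iffI)
    fix x assume "x \<in> V"
    then have "sup x 0 \<in> P" "sup (- x) 0 \<in> P" "x = sup x 0 - sup (- x) 0"
      using parts_in_cone sup_diff_sup_neg by auto
    then show "x \<in> {y - z | y z. y \<in> P \<and> z \<in> P}" by blast
  next
    fix x assume "x \<in> {y - z | y z. y \<in> P \<and> z \<in> P}"
    then show "x \<in> V" by (auto simp: cone_eq subspace_diff[OF subspace_V])
  qed
  show "bdd_above {norm_plus V N P x | x. x \<in> V \<and> N x \<le> 1}"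
    using norm_plus_le_N by (intro bdd_aboveI[where M=1]) force
qed (fact subspace_V is_norm)+

lemma norm_plus_eq: "x \<in> V \<Longrightarrow> norm_plus V N P x = N x"
  using norm_plus_le_N N_le_norm_plus by (simp add: order_antisym)

lemma c_plus_eq_one:
  assumes "e \<in> V" "N e = 1"
  shows "c_plus V N P = 1"
  unfolding c_plus_def
proof (rule cSup_eq_maximum)
  show "1 \<in> {norm_plus V N P x | x. x \<in> V \<and> N x \<le> 1}"
    using assms norm_plus_eq by force
  show "s \<le> 1" if "s \<in> {norm_plus V N P x | x. x \<in> V \<and> N x \<le> 1}" for s
    using that norm_plus_eq by force
qed

end

interpretation l1m: l1_like_space "l1m_V m" "l1m_N m" "l1m_P m" for m
proof
  show "subspace (l1m_V m)"
    by (auto simp: subspace_def l1m_V_def scaleR_fun_def)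
  show "is_norm_on (l1m_V m) (l1m_N m)"
    unfolding is_norm_on_def
  proof (intro conjI ballI allI)
    fix x assume x: "x \<in> l1m_V m"
    show "0 \<le> l1m_N m x" by (simp add: l1m_N_def sum_nonneg)
    show "l1m_N m x = 0 \<longleftrightarrow> x = 0"
      using x by (auto simp: l1m_N_def l1m_V_def sum_nonneg_eq_0_iff fun_eq_iff)
        (metis lessThan_iff not_less)
    fix c show "l1m_N m (c *\<^sub>R x) = \<bar>c\<bar> * l1m_N m x"
      by (simp add: l1m_N_def scaleR_fun_def abs_mult sum_distrib_left)
  next
    fix x y assume "x \<in> l1m_V m" "y \<in> l1m_V m"
    show "l1m_N m (x + y) \<le> l1m_N m x + l1m_N m y"
      unfolding l1m_N_def sum.distrib[symmetric] by (rule sum_mono) (simp add: abs_triangle_ineq)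
  qed
  show "l1m_P m = {x \<in> l1m_V m. \<forall>i. 0 \<le> x i}" by (fact l1m_P_def)
  fix x assume x: "x \<in> l1m_V m"
  then show "sup x 0 \<in> l1m_V m" by (simp add: l1m_V_def)
  show "l1m_N m x = l1m_N m (sup x 0) + l1m_N m (sup (- x) 0)"
    by (auto simp: l1m_N_def sum.distrib[symmetric] sup_max max_def intro!: sum.cong)
  fix i show "\<bar>x i\<bar> \<le> l1m_N m x"
  proof (cases "i < m")
    case True then show ?thesis unfolding l1m_N_def by (intro member_le_sum) auto
  next
    case False then show ?thesis using x by (simp add: l1m_V_def l1m_N_def sum_nonneg)
  qed
qed

interpretation l1: l1_like_space l1_V l1_N l1_P
proof
  have add: "x + y \<in> l1_V" if "x \<in> l1_V" "y \<in> l1_V" for x y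
  proof -
    from that have "summable (\<lambda>i. \<bar>x i\<bar> + \<bar>y i\<bar>)" by (intro summable_add) (auto simp: l1_V_def)
    then have "summable (\<lambda>i. \<bar>(x + y) i\<bar>)"
      by (rule summable_comparison_test'[where N=0]) (simp add: abs_triangle_ineq)
    then show ?thesis by (simp add: l1_V_def)
  qed
  show "subspace l1_V"
    unfolding subspace_def
  proof (intro conjI ballI allI)
    show "0 \<in> l1_V" by (simp add: l1_V_def)
  next
    fix x y assume "x \<in> l1_V" "y \<in> l1_V"
    then show "x + y \<in> l1_V" by (rule add)
  next
    fix c x assume "x \<in> l1_V"
    then show "c *\<^sub>R x \<in> l1_V"
      using summable_mult[of _ "\<bar>c\<bar>"] by (simp add: l1_V_def scaleR_fun_def abs_mult)
  qed
  show "is_norm_on l1_V l1_N"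
    unfolding is_norm_on_def
  proof (intro conjI ballI allI)
    fix x assume "x \<in> l1_V"
    then have sx: "summable (\<lambda>i. \<bar>x i\<bar>)" by (simp add: l1_V_def)
    show "0 \<le> l1_N x" unfolding l1_N_def by (rule suminf_nonneg[OF sx]) simp
    show "l1_N x = 0 \<longleftrightarrow> x = 0"
      unfolding l1_N_def using suminf_eq_zero_iff[OF sx] by (auto simp: fun_eq_iff)
    fix c show "l1_N (c *\<^sub>R x) = \<bar>c\<bar> * l1_N x"
      unfolding l1_N_def using suminf_mult[OF sx, of "\<bar>c\<bar>"] by (simp add: scaleR_fun_def abs_mult)
  next
    fix x y assume x: "x \<in> l1_V" and y: "y \<in> l1_V"
    then have sx: "summable (\<lambda>i. \<bar>x i\<bar>)" "summable (\<lambda>i. \<bar>y i\<bar>)" "summable (\<lambda>i. \<bar>(x + y) i\<bar>)"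
      using add[OF x y] by (auto simp: l1_V_def)
    have "l1_N (x + y) \<le> (\<Sum>i. \<bar>x i\<bar> + \<bar>y i\<bar>)"
      unfolding l1_N_def by (rule suminf_le) (use sx summable_add[OF sx(1,2)] in \<open>auto simp: abs_triangle_ineq\<close>)
    also have "\<dots> = l1_N x + l1_N y" unfolding l1_N_def using suminf_add[OF sx(1,2)] by simp
    finally show "l1_N (x + y) \<le> l1_N x + l1_N y" .
  qed
  show "l1_P = {x \<in> l1_V. \<forall>i. 0 \<le> x i}" by (fact l1_P_def)
  fix x assume x: "x \<in> l1_V"
  then have sx: "summable (\<lambda>i. \<bar>x i\<bar>)" by (simp add: l1_V_def)
  have parts: "summable (\<lambda>i. \<bar>sup x 0 i\<bar>)" "summable (\<lambda>i. \<bar>sup (- x) 0 i\<bar>)"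
    by (rule summable_comparison_test'[OF sx, where N=0]; simp)+
  then show "sup x 0 \<in> l1_V" by (simp add: l1_V_def)
  show "l1_N x = l1_N (sup x 0) + l1_N (sup (- x) 0)"
    unfolding l1_N_def suminf_add[OF parts] by (auto simp: sup_max max_def intro!: suminf_cong)
  fix i show "\<bar>x i\<bar> \<le> l1_N x"
    unfolding l1_N_def using sum_le_suminf[OF sx, of "{i}"] by simp
qed

lemma l1m_N_2: "l1m_N 2 v = \<bar>v 0\<bar> + \<bar>v 1\<bar>"
  by (simp add: l1m_N_def numeral_2_eq_2)

context ordered_normed
begin

lemma cone_combination_contraction:
  assumes "e1 \<in> P" "e2 \<in> P" "N e1 \<le> 1" "N e2 \<le> 1" "v \<in> l1m_P 2"
  shows "v 0 *\<^sub>R e1 + v 1 *\<^sub>R e2 \<in> P \<and> N (v 0 *\<^sub>R e1 + v 1 *\<^sub>R e2) \<le> l1m_N 2 v"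
proof
  have v: "0 \<le> v 0" "0 \<le> v 1" using assms(5) by (auto simp: l1m_P_def)
  then have P: "v 0 *\<^sub>R e1 \<in> P" "v 1 *\<^sub>R e2 \<in> P" using assms(1,2) cone_scale by auto
  then show "v 0 *\<^sub>R e1 + v 1 *\<^sub>R e2 \<in> P" by (rule cone_add)
  have "N (v 0 *\<^sub>R e1 + v 1 *\<^sub>R e2) \<le> N (v 0 *\<^sub>R e1) + N (v 1 *\<^sub>R e2)"
    using P cone_subset by (intro N_triangle) auto
  also have "\<dots> \<le> v 0 + v 1"
    using assms(1-4) v cone_subset N_scale by (auto intro!: add_mono mult_left_le)
  also have "\<dots> = l1m_N 2 v" using v by (simp add: l1m_N_2)
  finally show "N (v 0 *\<^sub>R e1 + v 1 *\<^sub>R e2) \<le> l1m_N 2 v" .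
qed

lemma proj_sym_norm_cone_diff_power_le:
  assumes n: "1 \<le> n" and C: "0 \<le> C" and c2: "c_pss n (l1m_V 2) (l1m_N 2) (l1m_P 2) \<le> ereal C"
    and y: "y \<in> P" and z: "z \<in> P"
  shows "proj_sym_norm n P N (symrep n [(1, y - z)]) \<le> C * (N y + N z) ^ n"
proof (cases "y = 0 \<and> z = 0")
  case True
  with n have "[] \<in> sym_reps n P (symrep n [(1, y - z)])"
    by (auto simp: sym_reps_def symrep_def fun_eq_iff linear_0)
  then have "proj_sym_norm n P N (symrep n [(1, y - z)]) \<le> 0"
    using proj_sym_norm_le[OF N_nonneg_cone] by fastforce
  moreover have "0 \<le> C * (N y + N z) ^ n"
    using C y z N_nonneg_cone by (intro mult_nonneg_nonneg zero_le_power add_nonneg_nonneg) auto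
  ultimately show ?thesis by linarith
next
  case False
  obtain e1 where e1: "e1 \<in> P" "N e1 \<le> 1" "y = N y *\<^sub>R e1" using cone_normalize[OF y] by blast
  obtain e2 where e2: "e2 \<in> P" "N e2 \<le> 1" "z = N z *\<^sub>R e2" using cone_normalize[OF z] by blast
  define T where "T v = v 0 *\<^sub>R e1 + v 1 *\<^sub>R e2" for v :: "nat \<Rightarrow> real"
  have T: "linear T"
    by (rule linearI) (simp_all add: T_def scaleR_fun_def algebra_simps scaleR_add_left)
  define w :: "nat \<Rightarrow> real" where "w = (\<lambda>i. if i = 0 then N y else if i = 1 then - N z else 0)"
  have w: "w \<in> l1m_V 2" "l1m_N 2 w = N y + N z" "T w = y - z"
    using y z e1(3) e2(3) N_nonneg_cone
    by (auto simp: w_def l1m_V_def l1m_N_2 T_def)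
  have "w \<noteq> 0"
    using False y z cone_subset N_eq_0_iff by (auto simp: w_def fun_eq_iff)
  have "proj_sym_norm n P N (symrep n [(1, y - z)])
      = proj_sym_norm n P N (symrep n (map (apsnd T) [(1, w)]))"
    using w by simp
  also have "\<dots> \<le> proj_sym_norm n (l1m_P 2) (l1m_N 2) (symrep n [(1, w)])"
  proof (rule proj_sym_norm_map_le[OF T _ N_nonneg_cone])
    show "T v \<in> P \<and> N (T v) \<le> l1m_N 2 v" if "v \<in> l1m_P 2" for v
      unfolding T_def using cone_combination_contraction[OF e1(1) e2(1) e1(2) e2(2) that] .
    show "sym_reps n (l1m_P 2) (symrep n [(1, w)]) \<noteq> {}"
      using w by (intro l1m.sym_reps_cone_nonempty) (auto simp: sym_tensors_def)
  qed
  also have "\<dots> \<le> C * proj_sym_norm n (l1m_V 2) (l1m_N 2) (symrep n [(1, w)])"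
    using w \<open>w \<noteq> 0\<close> l1m.coordinate_le
    by (intro proj_sym_norm_le_of_c_pss_le[OF c2] symrep_power_nonzero proj_sym_norm_power_pos)
      (auto simp: sym_tensors_def)
  also have "\<dots> \<le> C * (N y + N z) ^ n"
    using proj_sym_norm_le[OF l1m.N_nonneg, of "[(1, w)]" n 2] w C
    by (intro mult_left_mono) (auto simp: sym_reps_def)
  finally show ?thesis .
qed

lemma proj_sym_norm_cone_power_le:
  assumes n: "1 \<le> n" and C: "0 \<le> C" and c2: "c_pss n (l1m_V 2) (l1m_N 2) (l1m_P 2) \<le> ereal C"
    and x: "x \<in> V"
  shows "proj_sym_norm n P N (symrep n [(1, x)]) \<le> C * norm_plus V N P x ^ n"
proof (rule le_of_forall_pos_le_mult_power)
  fix d :: real assume "0 < d"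
  obtain y z where yz: "y \<in> P" "z \<in> P" "x = y - z" "N y + N z < norm_plus V N P x + d"
    using norm_plus_approx[OF x \<open>0 < d\<close>] .
  then have "proj_sym_norm n P N (symrep n [(1, x)]) \<le> C * (N y + N z) ^ n"
    using proj_sym_norm_cone_diff_power_le[OF n C c2] by simp
  also have "\<dots> \<le> C * (norm_plus V N P x + d) ^ n"
    using yz N_nonneg_cone C by (intro mult_left_mono power_mono) auto
  finally show "proj_sym_norm n P N (symrep n [(1, x)]) \<le> C * (norm_plus V N P x + d) ^ n" .
qed

lemma proj_sym_norm_cone_le:
  assumes n: "1 \<le> n" and C: "0 \<le> C" and c2: "c_pss n (l1m_V 2) (l1m_N 2) (l1m_P 2) \<le> ereal C"
    and u: "u \<in> sym_tensors n V"
  shows "proj_sym_norm n P N u \<le> C * proj_sym_norm n V (norm_plus V N P) u"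
proof (rule proj_sym_norm_greatest_mult[OF sym_reps_nonempty[OF u] C])
  fix xs assume "xs \<in> sym_reps n V u"
  then have u: "u = symrep n xs" and xs: "snd ` set xs \<subseteq> V" by (auto simp: sym_reps_def)
  have "proj_sym_norm n P N (symrep n xs) \<le> (\<Sum>(a, x)\<leftarrow>xs. \<bar>a\<bar> * (C * norm_plus V N P x ^ n))"
  proof (rule conjunct2[OF proj_sym_norm_symrep_le_sum[OF N_nonneg_cone]])
    fix x assume "x \<in> snd ` set xs"
    with xs have x: "x \<in> V" by blast
    then have "symrep n [(1, x)] \<in> sym_tensors n V" by (auto simp: sym_tensors_def)
    with proj_sym_norm_cone_power_le[OF n C c2 x] sym_reps_cone_nonempty
    show "sym_reps n P (symrep n [(1, x)]) \<noteq> {} \<and>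
        proj_sym_norm n P N (symrep n [(1, x)]) \<le> C * norm_plus V N P x ^ n"
      by blast
  qed
  also have "\<dots> = C * rep_cost n (norm_plus V N P) xs"
    by (induction xs) (auto simp: algebra_simps)
  finally show "proj_sym_norm n P N u \<le> C * rep_cost n (norm_plus V N P) xs"
    using u by simp
qed

lemma proj_sym_norm_norm_plus_le:
  assumes u: "u \<in> sym_tensors n V"
  shows "proj_sym_norm n V (norm_plus V N P) u \<le> c_plus V N P ^ n * proj_sym_norm n V N u"
proof (rule proj_sym_norm_greatest_mult[OF sym_reps_nonempty[OF u]])
  show "0 \<le> c_plus V N P ^ n" using c_plus_nonneg by simp
  fix xs assume xs: "xs \<in> sym_reps n V u"
  then have "proj_sym_norm n V (norm_plus V N P) u \<le> rep_cost n (norm_plus V N P) xs"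
    using norm_plus_nonneg by (intro proj_sym_norm_le) auto
  also have "\<dots> \<le> rep_cost n (\<lambda>x. c_plus V N P * N x) xs"
    using xs norm_plus_nonneg norm_plus_le_c_plus by (intro rep_cost_mono) (auto simp: sym_reps_def)
  finally show "proj_sym_norm n V (norm_plus V N P) u \<le> c_plus V N P ^ n * rep_cost n N xs"
    by (simp add: rep_cost_scale_norm)
qed

lemma c_pss_le_c_plus_power:
  assumes n: "1 \<le> n" and C: "0 \<le> C" and c2: "c_pss n (l1m_V 2) (l1m_N 2) (l1m_P 2) \<le> ereal C"
  shows "c_pss n V N P \<le> ereal (C * c_plus V N P ^ n)"
proof (rule c_pss_leI[OF _ N_nonneg])
  show "0 \<le> C * c_plus V N P ^ n" using C c_plus_nonneg by simp
  fix u assume u: "u \<in> sym_tensors n V"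
  have "proj_sym_norm n P N u \<le> C * proj_sym_norm n V (norm_plus V N P) u"
    by (rule proj_sym_norm_cone_le[OF n C c2 u])
  also have "\<dots> \<le> C * (c_plus V N P ^ n * proj_sym_norm n V N u)"
    using proj_sym_norm_norm_plus_le[OF u] C by (rule mult_left_mono)
  finally show "proj_sym_norm n P N u \<le> C * c_plus V N P ^ n * proj_sym_norm n V N u"
    by (simp add: mult.assoc)
qed

lemma c_pss_nonneg:
  assumes "u \<in> sym_tensors n V" "u \<noteq> (\<lambda>_. 0)"
  shows "0 \<le> c_pss n V N P"
proof -
  have "0 \<le> proj_sym_norm n P N u" "0 \<le> proj_sym_norm n V N u"
    using proj_sym_norm_nonneg[OF N_nonneg_cone sym_reps_cone_nonempty[OF assms(1)]]
      proj_sym_norm_nonneg[OF N_nonneg sym_reps_nonempty[OF assms(1)]] .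
  then have "0 \<le> ereal (proj_sym_norm n P N u / proj_sym_norm n V N u)" by simp
  also have "\<dots> \<le> c_pss n V N P"
    unfolding c_pss_def using assms by (intro SUP_upper) auto
  finally show ?thesis .
qed

lemma c_pss_le_gamma_on:
  assumes "\<forall>x\<in>V. norm_plus V N P x = N x"
  shows "c_pss n V N P \<le> gamma_on TYPE('a) n"
  unfolding gamma_on_def
proof (rule INF_greatest)
  fix C assume "C \<in> {C. 0 \<le> C \<and> (\<forall>(V::'a set) N P. ordered_normed_space V N P \<longrightarrow>
      (\<forall>u\<in>sym_tensors n V. proj_sym_norm n P N u \<le> C * proj_sym_norm n V (norm_plus V N P) u))}"
  then have C: "0 \<le> C"
    and bound: "\<forall>u\<in>sym_tensors n V. proj_sym_norm n P N u \<le> C * proj_sym_norm n V (norm_plus V N P) u"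
    using ordered_normed_space by auto
  show "c_pss n V N P \<le> ereal C"
    using bound proj_sym_norm_cong[OF assms] by (intro c_pss_leI[OF C N_nonneg]) auto
qed

end

lemma ereal_divide_le_of_le_mult:
  fixes x :: ereal
  assumes "x \<le> ereal (r * d)" "0 \<le> r" "0 \<le> d"
  shows "x / ereal d \<le> ereal r"
proof (cases "d = 0")
  case True
  with assms show ?thesis by (cases x) (auto simp: zero_ereal_def)
next
  case False
  with assms show ?thesis by (cases x) (auto simp: divide_le_eq mult.commute)
qed

lemma gamma_on_le:
  assumes n: "1 \<le> n" and C: "0 \<le> C" and c2: "c_pss n (l1m_V 2) (l1m_N 2) (l1m_P 2) \<le> ereal C"
  shows "gamma_on TYPE('a::real_vector) n \<le> ereal C"
  unfolding gamma_on_def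
  by (rule INF_lower2[of C]) (use C ordered_normed.proj_sym_norm_cone_le[OF _ n C c2] in
      \<open>auto simp: ordered_normed_def\<close>)

lemma sup_ratio_on_le:
  assumes n: "1 \<le> n" and C: "0 \<le> C" and c2: "c_pss n (l1m_V 2) (l1m_N 2) (l1m_P 2) \<le> ereal C"
  shows "sup_ratio_on TYPE('a::real_vector) n \<le> ereal C"
  unfolding sup_ratio_on_def
proof (rule Sup_least)
  fix r assume "r \<in> {c_pss n V N P / ereal (c_plus V N P ^ n) | (V::'a set) N P. ordered_normed_space V N P}"
  then obtain V :: "'a set" and N P where r: "r = c_pss n V N P / ereal (c_plus V N P ^ n)"
    and "ordered_normed_space V N P" by blast
  then interpret ordered_normed V N P by unfold_locales
  show "r \<le> ereal C"
    unfolding r using c_pss_le_c_plus_power[OF n C c2] C c_plus_nonneg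
    by (intro ereal_divide_le_of_le_mult) auto
qed

lemma sup_unit_on_le:
  assumes n: "1 \<le> n" and C: "0 \<le> C" and c2: "c_pss n (l1m_V 2) (l1m_N 2) (l1m_P 2) \<le> ereal C"
  shows "sup_unit_on TYPE('a::real_vector) n \<le> ereal C"
  unfolding sup_unit_on_def
proof (rule Sup_least)
  fix r assume "r \<in> {c_pss n V N P | (V::'a set) N P. ordered_normed_space V N P \<and> c_plus V N P = 1}"
  then obtain V :: "'a set" and N P where r: "r = c_pss n V N P"
    and "ordered_normed_space V N P" and c1: "c_plus V N P = 1" by blast
  then interpret ordered_normed V N P by unfold_locales
  show "r \<le> ereal C"
    using c_pss_le_c_plus_power[OF n C c2] c1 r by simp
qed

context l1_like_space
begin

lemma c_pss_l1m_2_le: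
  assumes sub: "l1m_V 2 \<subseteq> V" and N_eq: "\<forall>x\<in>l1m_V 2. N x = l1m_N 2 x"
    and N_ge: "\<And>x. x \<in> V \<Longrightarrow> l1m_N 2 x \<le> N x"
  shows "c_pss n (l1m_V 2) (l1m_N 2) (l1m_P 2) \<le> c_pss n V N P"
proof (rule c_pss_le_of_contractive_projection[OF _ _ sub N_eq])
  define Q :: "(nat \<Rightarrow> real) \<Rightarrow> nat \<Rightarrow> real" where "Q x = (\<lambda>i. if i < 2 then x i else 0)" for x
  show "ordered_normed V N P" "ordered_normed (l1m_V 2) (l1m_N 2) (l1m_P 2)"
    using ordered_normed_space l1m.ordered_normed_space by (simp_all add: ordered_normed_def)
  show "linear Q"
    by (rule linearI) (auto simp: Q_def fun_eq_iff scaleR_fun_def)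
  show "Q x \<in> l1m_V 2 \<and> l1m_N 2 (Q x) \<le> N x" if "x \<in> V" for x
    using N_ge[OF that] by (simp add: Q_def l1m_V_def l1m_N_def)
  show "Q x \<in> l1m_P 2" if "x \<in> P" for x
    using that by (simp add: Q_def l1m_P_def l1m_V_def cone_eq)
  show "Q x = x" if "x \<in> l1m_V 2" for x
    using that by (auto simp: Q_def l1m_V_def fun_eq_iff)
qed

end

lemma c_pss_l1m_2_le_l1m:
  assumes "2 \<le> m"
  shows "c_pss n (l1m_V 2) (l1m_N 2) (l1m_P 2) \<le> c_pss n (l1m_V m) (l1m_N m) (l1m_P m)"
proof (rule l1m.c_pss_l1m_2_le)
  show "l1m_V 2 \<subseteq> l1m_V m" using assms by (auto simp: l1m_V_def)
  show "\<forall>x\<in>l1m_V 2. l1m_N m x = l1m_N 2 x"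
    unfolding l1m_N_def using assms
    by (auto simp: l1m_V_def intro!: sum.mono_neutral_left[symmetric]) (meson not_less)
  show "l1m_N 2 x \<le> l1m_N m x" for x
    unfolding l1m_N_def using assms by (intro sum_mono2) auto
qed

lemma c_pss_l1m_2_le_l1: "c_pss n (l1m_V 2) (l1m_N 2) (l1m_P 2) \<le> c_pss n l1_V l1_N l1_P"
proof (rule l1.c_pss_l1m_2_le)
  show "l1m_V 2 \<subseteq> l1_V"
  proof
    fix x assume "x \<in> l1m_V 2"
    then have "\<And>i. i \<notin> {..<2} \<Longrightarrow> \<bar>x i\<bar> = 0" by (simp add: l1m_V_def)
    then have "summable (\<lambda>i. \<bar>x i\<bar>)"
      by (intro summable_finite[of "{..<2}"]) auto
    then show "x \<in> l1_V" by (simp add: l1_V_def)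
  qed
  show "\<forall>x\<in>l1m_V 2. l1_N x = l1m_N 2 x"
  proof
    fix x assume "x \<in> l1m_V 2"
    then have "\<And>i. i \<notin> {..<2} \<Longrightarrow> \<bar>x i\<bar> = 0" by (simp add: l1m_V_def)
    then show "l1_N x = l1m_N 2 x"
      unfolding l1_N_def l1m_N_def by (intro suminf_finite) auto
  qed
  show "l1m_N 2 x \<le> l1_N x" if "x \<in> l1_V" for x
    using that unfolding l1m_N_def l1_N_def l1_V_def by (intro sum_le_suminf) auto
qed

definition unit_vector_0 :: "nat \<Rightarrow> real" where
  "unit_vector_0 = (\<lambda>i. if i = 0 then 1 else 0)"

lemma unit_vector_0: "unit_vector_0 \<in> l1m_V 2" "l1m_N 2 unit_vector_0 = 1" "unit_vector_0 \<noteq> 0"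
  by (auto simp: unit_vector_0_def l1m_V_def l1m_N_2 fun_eq_iff)

lemma c_plus_l1m_2: "c_plus (l1m_V 2) (l1m_N 2) (l1m_P 2) = 1"
  using l1m.c_plus_eq_one unit_vector_0 by blast

lemma le_c_pss_l1m_2I:
  assumes "\<And>C. 0 \<le> C \<Longrightarrow> c_pss n (l1m_V 2) (l1m_N 2) (l1m_P 2) \<le> ereal C \<Longrightarrow> x \<le> ereal C"
  shows "x \<le> c_pss n (l1m_V 2) (l1m_N 2) (l1m_P 2)"
proof (rule ereal_le_real)
  have "0 \<le> c_pss n (l1m_V 2) (l1m_N 2) (l1m_P 2)"
    using unit_vector_0 symrep_power_nonzero[of unit_vector_0 n]
    by (intro l1m.c_pss_nonneg[of "symrep n [(1, unit_vector_0)]"]) (auto simp: sym_tensors_def)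
  then show "x \<le> ereal C" if "c_pss n (l1m_V 2) (l1m_N 2) (l1m_P 2) \<le> ereal C" for C
    using that assms by (meson ereal_less_eq(5) order_trans)
qed

lemma le_c_pss_l1m_2:
  assumes "1 \<le> n"
  shows "gamma_on TYPE('a::real_vector) n \<le> c_pss n (l1m_V 2) (l1m_N 2) (l1m_P 2)"
    and "sup_ratio_on TYPE('a) n \<le> c_pss n (l1m_V 2) (l1m_N 2) (l1m_P 2)"
    and "sup_unit_on TYPE('a) n \<le> c_pss n (l1m_V 2) (l1m_N 2) (l1m_P 2)"
  using gamma_on_le[OF assms] sup_ratio_on_le[OF assms] sup_unit_on_le[OF assms]
  by (auto intro!: le_c_pss_l1m_2I)

lemma c_pss_l1m_2_le_sup_ratio_on:
  "c_pss n (l1m_V 2) (l1m_N 2) (l1m_P 2) \<le> sup_ratio_on TYPE(nat \<Rightarrow> real) n"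
proof -
  have "c_pss n (l1m_V 2) (l1m_N 2) (l1m_P 2)
      = c_pss n (l1m_V 2) (l1m_N 2) (l1m_P 2) / ereal (c_plus (l1m_V 2) (l1m_N 2) (l1m_P 2) ^ n)"
    by (simp add: c_plus_l1m_2 divide_ereal_def one_ereal_def[symmetric])
  then show ?thesis
    unfolding sup_ratio_on_def using l1m.ordered_normed_space[of 2] by (intro Sup_upper) blast
qed

lemma c_pss_l1m_2_le_sup_unit_on:
  "c_pss n (l1m_V 2) (l1m_N 2) (l1m_P 2) \<le> sup_unit_on TYPE(nat \<Rightarrow> real) n"
  unfolding sup_unit_on_def using l1m.ordered_normed_space[of 2] c_plus_l1m_2
  by (intro Sup_upper) blast

theorem theorem5p3:
  fixes n :: nat
  assumes "1 \<le> n"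
  shows "(\<forall>m\<ge>2. c_pss n (l1m_V m) (l1m_N m) (l1m_P m) = gamma_on TYPE(nat \<Rightarrow> real) n)
    \<and> c_pss n l1_V l1_N l1_P = gamma_on TYPE(nat \<Rightarrow> real) n
    \<and> gamma_on TYPE('a::real_vector) n \<le> gamma_on TYPE(nat \<Rightarrow> real) n
    \<and> sup_ratio_on TYPE('a) n \<le> gamma_on TYPE(nat \<Rightarrow> real) n
    \<and> sup_unit_on TYPE('a) n \<le> gamma_on TYPE(nat \<Rightarrow> real) n
    \<and> sup_ratio_on TYPE(nat \<Rightarrow> real) n = gamma_on TYPE(nat \<Rightarrow> real) n
    \<and> sup_unit_on TYPE(nat \<Rightarrow> real) n = gamma_on TYPE(nat \<Rightarrow> real) n"
proof -
  let ?c2 = "c_pss n (l1m_V 2) (l1m_N 2) (l1m_P 2)"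
  note below_c2 = le_c_pss_l1m_2[OF assms]
  have l1m_le: "c_pss n (l1m_V m) (l1m_N m) (l1m_P m) \<le> gamma_on TYPE(nat \<Rightarrow> real) n" for m
    using l1m.norm_plus_eq by (intro l1m.c_pss_le_gamma_on) blast
  have l1_le: "c_pss n l1_V l1_N l1_P \<le> gamma_on TYPE(nat \<Rightarrow> real) n"
    using l1.norm_plus_eq by (intro l1.c_pss_le_gamma_on) blast
  have gamma: "gamma_on TYPE(nat \<Rightarrow> real) n = ?c2"
    using below_c2(1) l1m_le[of 2] by (rule antisym)
  show ?thesis
    using below_c2 le_c_pss_l1m_2[OF assms, where 'a="nat \<Rightarrow> real"] gamma l1m_le l1_le
      c_pss_l1m_2_le_l1m c_pss_l1m_2_le_l1 c_pss_l1m_2_le_sup_ratio_on c_pss_l1m_2_le_sup_unit_on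
    by (auto intro: antisym)
qed

end
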